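(* Let $m,n$ be positive integers, let $\bm{D}_0\in\mathbb{R}^{m\times m}$ be invertible, let $\bm{X}_0\in\mathbb{R}^{m\times n}$, and let $\bm{Y}=\bm{D}_0\bm{X}_0$. Let $\Omega\subseteq[m]\times[n]$ be the support of $\bm{X}_0$, and for $i\in[m]$ let $\Omega_i\subseteq[n]$ be the support of the $i$-th row of $\bm{X}_0$, with complement $\Omega_i^c=[n]\setminus\Omega_i$. Consider the problem of finding $\bm{D}\in\mathbb{R}^{m\times m}$ and $\bm{X}\in\mathbb{R}^{m\times n}$ such that $$\bm{Y}=\bm{D}\bm{X}\quad\text{and}\quad \bm{X}_{i,j}=0\ \text{for all }(i,j)\notin\Omega.$$ Say that this problem has a unique solution if every solution is of the form $\bm{D}=\bm{D}_0\bm{S}$, $\bm{X}=\bm{S}^{-1}\bm{X}_0$ for some diagonal matrix $\bm{S}$ with nonzero diagonal entries. If the problem has a unique solution in this sense, then: (1) $n\ge n_0=m+\frac{|\Omega|}{m}-1$; (2) for all $i\in[m]$, $|\Omega_i^c|\ge m-1$; (3) for all $i\in[m]$ and all $i'\in[m]$ with $i'\ne i$, there exists $j\in[n]$ such that $(\bm{X}_0)_{i,j}=0$ and $(\bm{X}_0)_{i',j}\ne 0$.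
   Context: $[n]=\{1,\dots,n\}$. The support of a matrix or row vector is the set of indices of its nonzero entries. *)

theory Defs
  imports "HOL-Analysis.Analysis"
begin

definition diag_nonsingular :: "real ^'m ^'m \<Rightarrow> bool" where
  "diag_nonsingular S \<longleftrightarrow> (\<forall>i j. i \<noteq> j \<longrightarrow> S $ i $ j = 0) \<and> (\<forall>i. S $ i $ i \<noteq> 0)"

definition unique_factorization :: "real ^'m ^'m \<Rightarrow> real ^'n ^'m \<Rightarrow> bool" where
  "unique_factorization D0 X0 \<longleftrightarrow>
     (\<forall>(D :: real ^'m ^'m) (X :: real ^'n ^'m).
        D0 ** X0 = D ** X \<and> (\<forall>i j. X0 $ i $ j = 0 \<longrightarrow> X $ i $ j = 0) \<longrightarrow>
        (\<exists>S. diag_nonsingular S \<and> D = D0 ** S \<and> X = matrix_inv S ** X0))"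

end

(* Suppose some combination w of the rows of X0 other than row i vanishes wherever row i does.
   The shear T = I + e_i w^T adds w^T X0 to row i without enlarging the support of X0, and
   since w_i = 0 its inverse is I - e_i w^T; so (D0 T^-1, T X0) is another solution, and T^-1
   is not diagonal.  Such a w exists as soon as row i has fewer than m - 1 zeros (an
   underdetermined homogeneous system), giving (2); w = e_i' gives (3); and summing
   |Omega_i| = n - |Omega_i^c| <= n - m + 1 over the m rows gives (1). *)
theory Submission
  imports Defs
begin

definition shear :: "'m \<Rightarrow> 'a::comm_ring_1 ^'m \<Rightarrow> 'a ^'m ^'m" where
  "shear i w = (\<chi> r c. (if r = c then 1 else 0) + (if r = i then w $ c else 0))"

lemma shear_mult:
  "shear i w ** A = (\<chi> r. if r = i then A $ i + w v* A else A $ r)"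
  by (simp add: vec_eq_iff shear_def matrix_matrix_mult_def vector_matrix_mult_def
      distrib_right sum.distrib if_distrib[of "\<lambda>x. x * _"] cong: if_cong)

lemma vector_shear_mult: "v v* shear i w = v + v $ i *s w"
  by (simp add: vec_eq_iff shear_def vector_matrix_mult_def distrib_left sum.distrib
      if_distrib[of "\<lambda>x. _ * x"] cong: if_cong)

lemma shear_row: "shear i w $ r = mat 1 $ r + (if r = i then w else 0)"
  by (simp add: vec_eq_iff shear_def mat_def)

lemma shear_inverse:
  assumes "w $ i = 0"
  shows "shear i (- w) ** shear i w = mat 1"
  using assms unfolding shear_mult vector_shear_mult by (simp add: vec_eq_iff shear_row)

lemma underdetermined_vector_matrix_mult:
  fixes A :: "'a::field ^'n ^'m" and K :: "'m set" and J :: "'n set"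
  assumes "card J < card K"
  shows "\<exists>w. w \<noteq> 0 \<and> (\<forall>k. k \<notin> K \<longrightarrow> w $ k = 0) \<and> (\<forall>j\<in>J. (w v* A) $ j = 0)"
proof (rule ccontr)
  assume no_solution: "\<not> ?thesis"
  define M :: "'a ^'m ^'n" where "M = (\<chi> j k. if j \<in> J then A $ k $ j else 0)"
  define U :: "('a ^'m) set" where "U = {w. \<forall>k. k \<notin> K \<longrightarrow> w $ k = 0}"
  define W :: "('a ^'n) set" where "W = {v. \<forall>j. j \<notin> J \<longrightarrow> v $ j = 0}"
  have M_apply: "(M *v w) $ j = (if j \<in> J then (w v* A) $ j else 0)" for w j
    by (simp add: M_def matrix_vector_mult_def vector_matrix_mult_def mult.commute)
  have U: "vec.subspace U"
    unfolding U_def by (rule subspace_substandard_cart)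
  have "inj_on ((*v) M) U"
    unfolding vec.inj_on_iff_eq_0[OF U] using no_solution by (auto simp: U_def M_apply vec_eq_iff)
  then have "vec.dim ((*v) M ` U) = vec.dim U"
    by (metis U matrix_vector_mul_linear_gen vec.dim_image_eq vec.span_eq_iff)
  moreover have "(*v) M ` U \<subseteq> W"
    by (auto simp: W_def M_apply)
  ultimately have "vec.dim U \<le> vec.dim W"
    by (metis vec.dim_subset)
  then show False
    using assms by (simp add: U_def W_def dim_substandard_cart)
qed

lemma unique_factorization_no_shear:
  fixes D0 :: "real ^'m ^'m" and X0 :: "real ^'n ^'m"
  assumes "invertible D0" and "unique_factorization D0 X0"
    and "w $ i = 0" and "w \<noteq> 0"
    and vanishes: "\<forall>j. X0 $ i $ j = 0 \<longrightarrow> (w v* X0) $ j = 0"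
  shows False
proof -
  define X where "X = shear i w ** X0"
  have "(D0 ** shear i (- w)) ** X = D0 ** ((shear i (- w) ** shear i w) ** X0)"
    by (simp add: X_def matrix_mul_assoc)
  then have "D0 ** X0 = (D0 ** shear i (- w)) ** X"
    by (simp add: shear_inverse[OF \<open>w $ i = 0\<close>] matrix_mul_lid)
  moreover have "\<forall>r j. X0 $ r $ j = 0 \<longrightarrow> X $ r $ j = 0"
    using vanishes by (simp add: X_def shear_mult)
  ultimately obtain S where S: "diag_nonsingular S" "D0 ** shear i (- w) = D0 ** S"
    using assms(2) unfolding unique_factorization_def by blast
  obtain B where "B ** D0 = mat 1"
    using assms(1) unfolding invertible_def by blast
  then have "shear i (- w) = S"
    using arg_cong[OF S(2), of "(**) B"] by (simp add: matrix_mul_assoc matrix_mul_lid)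
  obtain k where "w $ k \<noteq> 0"
    using \<open>w \<noteq> 0\<close> by (auto simp: vec_eq_iff)
  with \<open>w $ i = 0\<close> have "k \<noteq> i" and "S $ i $ k \<noteq> 0"
    by (auto simp: \<open>shear i (- w) = S\<close>[symmetric] shear_def)
  with S(1) show False
    unfolding diag_nonsingular_def by auto
qed

lemma unique_factorization_card_zeros_row:
  fixes D0 :: "real ^'m ^'m" and X0 :: "real ^'n ^'m"
  assumes "invertible D0" and "unique_factorization D0 X0"
  shows "CARD('m) - 1 \<le> card {j. X0 $ i $ j = 0}"
proof (rule ccontr)
  assume "\<not> ?thesis"
  then have "card {j. X0 $ i $ j = 0} < card (UNIV - {i})"
    by (simp add: card_Diff_singleton)
  then obtain w where "w $ i = 0" "w \<noteq> 0" "\<forall>j. X0 $ i $ j = 0 \<longrightarrow> (w v* X0) $ j = 0"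
    using underdetermined_vector_matrix_mult[of "{j. X0 $ i $ j = 0}" "UNIV - {i}" X0] by auto
  with assms show False
    by (rule unique_factorization_no_shear)
qed

lemma unique_factorization_row_not_covered:
  fixes D0 :: "real ^'m ^'m" and X0 :: "real ^'n ^'m"
  assumes "invertible D0" and "unique_factorization D0 X0" and "i' \<noteq> i"
  shows "\<exists>j. X0 $ i $ j = 0 \<and> X0 $ i' $ j \<noteq> 0"
proof (rule ccontr)
  assume "\<not> ?thesis"
  moreover have "axis i' 1 v* X0 = X0 $ i'"
    by (simp add: vec_eq_iff vector_matrix_mult_def axis_def if_distrib[of "\<lambda>x. x * _"] cong: if_cong)
  ultimately have "\<forall>j. X0 $ i $ j = 0 \<longrightarrow> (axis i' 1 v* X0) $ j = 0"
    by auto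
  moreover have "axis i' 1 $ i = (0::real)"
    using \<open>i' \<noteq> i\<close> by (simp add: axis_def)
  moreover have "axis i' (1::real) \<noteq> 0"
    by simp
  ultimately show False
    using unique_factorization_no_shear[OF assms(1,2)] by blast
qed

lemma card_support_le_card_zeros_rows:
  fixes A :: "'a::zero ^'n ^'m"
  assumes "\<And>i. c \<le> card {j. A $ i $ j = 0}"
  shows "real (card {(i, j). A $ i $ j \<noteq> 0}) \<le> real CARD('m) * (real CARD('n) - real c)"
proof -
  have "{(i, j). A $ i $ j \<noteq> 0} = (SIGMA i:UNIV. UNIV - {j. A $ i $ j = 0})"
    by auto
  then have "real (card {(i, j). A $ i $ j \<noteq> 0}) = (\<Sum>i\<in>UNIV. real CARD('n) - real (card {j. A $ i $ j = 0}))"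
    by (simp add: card_SigmaI card_Diff_subset of_nat_diff card_mono)
  also have "\<dots> \<le> (\<Sum>i\<in>(UNIV::'m set). real CARD('n) - real c)"
    by (rule sum_mono) (simp add: assms)
  finally show ?thesis
    by simp
qed

theorem proposition2:
  fixes D0 :: "real ^'m ^'m" and X0 :: "real ^'n ^'m"
  assumes "invertible D0"
    and "unique_factorization D0 X0"
  shows "real CARD('n) \<ge> real CARD('m) + real (card {(i, j). X0 $ i $ j \<noteq> 0}) / real CARD('m) - 1
    \<and> (\<forall>i. card {j. X0 $ i $ j = 0} \<ge> CARD('m) - 1)
    \<and> (\<forall>i i'. i' \<noteq> i \<longrightarrow> (\<exists>j. X0 $ i $ j = 0 \<and> X0 $ i' $ j \<noteq> 0))"
proof -
  have zeros: "CARD('m) - 1 \<le> card {j. X0 $ i $ j = 0}" for i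
    using assms by (rule unique_factorization_card_zeros_row)
  have "real (card {(i, j). X0 $ i $ j \<noteq> 0}) \<le> real CARD('m) * (real CARD('n) - real (CARD('m) - 1))"
    using zeros by (rule card_support_le_card_zeros_rows)
  then have "real (card {(i, j). X0 $ i $ j \<noteq> 0}) \<le> real CARD('m) * (real CARD('n) - real CARD('m) + 1)"
    by (simp add: of_nat_diff Suc_leI algebra_simps)
  then have "real (card {(i, j). X0 $ i $ j \<noteq> 0}) / real CARD('m) \<le> real CARD('n) - real CARD('m) + 1"
    by (simp add: divide_le_eq mult.commute)
  then show ?thesis
    using zeros unique_factorization_row_not_covered[OF assms] by auto
qed

end
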